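(* Let $n\geq 2$ and let $(\mu_0^n,\cdot,[-,-])$ be a Poisson algebra structure on the associative algebra $\mu_0^n$. Then it is a trivial Poisson algebra; namely $[e_i,e_j]=0$ for all $1\leq i,j\leq n$.
   Context: $\mu_0^n$ is the complex commutative associative algebra with basis $\{e_1,\dots,e_n\}$ and $e_i\cdot e_j=e_{i+j}$ for $2\leq i+j\leq n$, other products zero. A Poisson algebra is a triple $(\mathfrak{L},\cdot,[-,-])$ with $(\mathfrak{L},\cdot)$ commutative associative, $(\mathfrak{L},[-,-])$ a Lie algebra, and $[x,y\cdot z]=[x,y]\cdot z+y\cdot[x,z]$ for all $x,y,z$. It is trivial if $\mathfrak{L}\cdot\mathfrak{L}=0$ or $[\mathfrak{L},\mathfrak{L}]=0$. *)

theory Defs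
  imports Main "HOL-Analysis.Analysis"
begin

text \<open>The algebra mu_0^n over the complex numbers, realised concretely: an element is its
coordinate vector x :: nat => complex with respect to the basis e_1,...,e_n, i.e. a function
supported in {1..n}.\<close>

definition mu_carrier :: "nat \<Rightarrow> (nat \<Rightarrow> complex) set" where
  "mu_carrier n = {x. \<forall>k. (k < 1 \<or> n < k) \<longrightarrow> x k = 0}"

definition mu_e :: "nat \<Rightarrow> nat \<Rightarrow> complex" where
  "mu_e i = (\<lambda>k. if k = i then 1 else 0)"

text \<open>The associative product: bilinear extension of e_i e_j = e_(i+j) if i+j <= n, else 0.\<close>
definition mu_mult :: "nat \<Rightarrow> (nat \<Rightarrow> complex) \<Rightarrow> (nat \<Rightarrow> complex) \<Rightarrow> (nat \<Rightarrow> complex)" where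
  "mu_mult n x y = (\<lambda>k. if 1 \<le> k \<and> k \<le> n then
      (\<Sum>i\<in>{1..n}. \<Sum>j\<in>{1..n}. if i + j = k then x i * y j else 0) else 0)"

definition poisson_bracket_mu :: "nat \<Rightarrow> ((nat \<Rightarrow> complex) \<Rightarrow> (nat \<Rightarrow> complex) \<Rightarrow> (nat \<Rightarrow> complex)) \<Rightarrow> bool" where
  "poisson_bracket_mu n br \<longleftrightarrow>
     (\<forall>x\<in>mu_carrier n. \<forall>y\<in>mu_carrier n. br x y \<in> mu_carrier n) \<and>
     (\<forall>x\<in>mu_carrier n. \<forall>y\<in>mu_carrier n. \<forall>z\<in>mu_carrier n.
        br (\<lambda>k. x k + y k) z = (\<lambda>k. br x z k + br y z k) \<and>
        br z (\<lambda>k. x k + y k) = (\<lambda>k. br z x k + br z y k)) \<and>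
     (\<forall>c::complex. \<forall>x\<in>mu_carrier n. \<forall>y\<in>mu_carrier n.
        br (\<lambda>k. c * x k) y = (\<lambda>k. c * br x y k) \<and> br x (\<lambda>k. c * y k) = (\<lambda>k. c * br x y k)) \<and>
     (\<forall>x\<in>mu_carrier n. br x x = (\<lambda>k. 0)) \<and>
     (\<forall>x\<in>mu_carrier n. \<forall>y\<in>mu_carrier n. \<forall>z\<in>mu_carrier n.
        (\<lambda>k. br x (br y z) k + br y (br z x) k + br z (br x y) k) = (\<lambda>k. 0)) \<and>
     (\<forall>x\<in>mu_carrier n. \<forall>y\<in>mu_carrier n. \<forall>z\<in>mu_carrier n.
        br x (mu_mult n y z) = (\<lambda>k. mu_mult n (br x y) z k + mu_mult n y (br x z) k))"

end

theory Submission
  imports Defs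
begin

text \<open>Since \<open>e\<^sub>j\<^sub>+\<^sub>1 = e\<^sub>1 e\<^sub>j\<close>, the element \<open>e\<^sub>1\<close> generates \<open>\<mu>\<^sub>0\<^sup>n\<close>, so a derivation
vanishing on \<open>e\<^sub>1\<close> vanishes on every basis vector. The derivation \<open>[e\<^sub>1,-]\<close> kills \<open>e\<^sub>1\<close>,
hence \<open>[e\<^sub>1,e\<^sub>i] = 0\<close>; by antisymmetry the derivation \<open>[e\<^sub>i,-]\<close> kills \<open>e\<^sub>1\<close> as well.\<close>

lemma mu_e_in_mu_carrier: "i \<in> {1..n} \<Longrightarrow> mu_e i \<in> mu_carrier n"
  by (auto simp: mu_e_def mu_carrier_def)

lemma mu_mult_mu_e:
  assumes "i \<in> {1..n}" "j \<in> {1..n}"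
  shows "mu_mult n (mu_e i) (mu_e j) = (if i + j \<le> n then mu_e (i + j) else (\<lambda>k. 0))"
proof
  fix k
  have "(\<Sum>i'\<in>{1..n}. \<Sum>j'\<in>{1..n}. if i' + j' = k then mu_e i i' * mu_e j j' else 0)
      = (\<Sum>i'\<in>{1..n}. if i' = i then (\<Sum>j'\<in>{1..n}. if j' = j then (if i + j = k then 1 else 0) else 0) else 0)"
    by (intro sum.cong refl) (auto simp: mu_e_def intro: sum.neutral)
  also have "\<dots> = (if i + j = k then 1 else 0)"
    using assms by simp
  finally have coeff: "(\<Sum>i'\<in>{1..n}. \<Sum>j'\<in>{1..n}. if i' + j' = k then mu_e i i' * mu_e j j' else 0)
      = (if i + j = k then 1 else 0)" .
  show "mu_mult n (mu_e i) (mu_e j) k = (if i + j \<le> n then mu_e (i + j) else (\<lambda>k. 0)) k"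
    unfolding mu_mult_def coeff using assms by (auto simp: mu_e_def)
qed

lemma mu_mult_zero_left [simp]: "mu_mult n (\<lambda>k. 0) y = (\<lambda>k. 0)"
  unfolding mu_mult_def by (intro ext) (simp only: mult_zero_left if_cancel sum.neutral_const)

lemma mu_mult_zero_right [simp]: "mu_mult n x (\<lambda>k. 0) = (\<lambda>k. 0)"
  unfolding mu_mult_def by (intro ext) (simp only: mult_zero_right if_cancel sum.neutral_const)

lemma mu_derivation_vanishes_on_mu_e:
  assumes leibniz: "\<And>y z. y \<in> mu_carrier n \<Longrightarrow> z \<in> mu_carrier n \<Longrightarrow>
      D (mu_mult n y z) = (\<lambda>k. mu_mult n (D y) z k + mu_mult n y (D z) k)"
    and D_e1: "D (mu_e 1) = (\<lambda>k. 0)"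
    and j: "j \<in> {1..n}"
  shows "D (mu_e j) = (\<lambda>k. 0)"
proof -
  have "1 \<le> j" "j \<le> n" using j by auto
  then show ?thesis
  proof (induction j rule: nat_induct_at_least)
    case base
    show ?case using D_e1 .
  next
    case (Suc j)
    have e1: "mu_e 1 \<in> mu_carrier n" and ej: "mu_e j \<in> mu_carrier n"
      using Suc by (auto intro: mu_e_in_mu_carrier)
    have "mu_e (Suc j) = mu_mult n (mu_e 1) (mu_e j)"
      using Suc by (simp add: mu_mult_mu_e)
    then show ?case
      using leibniz[OF e1 ej] D_e1 Suc by simp
  qed
qed

lemma poisson_bracket_mu_anticomm:
  assumes P: "poisson_bracket_mu n br" and x: "x \<in> mu_carrier n" and y: "y \<in> mu_carrier n"
  shows "br y x = (\<lambda>k. - br x y k)"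
proof -
  let ?s = "\<lambda>k. x k + y k"
  have s: "?s \<in> mu_carrier n" using x y by (auto simp: mu_carrier_def)
  have "(\<lambda>k. 0) = br ?s ?s"
    using P s by (simp add: poisson_bracket_mu_def)
  also have "\<dots> = (\<lambda>k. br x x k + br x y k + (br y x k + br y y k))"
    using P x y s by (simp add: poisson_bracket_mu_def)
  also have "\<dots> = (\<lambda>k. br x y k + br y x k)"
    using P x y by (simp add: poisson_bracket_mu_def)
  finally show ?thesis
    by (metis add_eq_0_iff)
qed

theorem mainTheorem5:
  fixes n :: nat and br :: "(nat \<Rightarrow> complex) \<Rightarrow> (nat \<Rightarrow> complex) \<Rightarrow> (nat \<Rightarrow> complex)"
  assumes "n \<ge> 2" and "poisson_bracket_mu n br"
  shows "\<forall>i\<in>{1..n}. \<forall>j\<in>{1..n}. br (mu_e i) (mu_e j) = (\<lambda>k. 0)"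
proof (intro ballI)
  \<comment> \<open>Only \<open>1 \<le> n\<close>, implied by \<open>i \<in> {1..n}\<close>, is used.\<close>
  fix i j assume i: "i \<in> {1..n}" and j: "j \<in> {1..n}"
  have e1: "mu_e 1 \<in> mu_carrier n" and ei: "mu_e i \<in> mu_carrier n"
    using i by (auto intro: mu_e_in_mu_carrier)
  have leibniz: "\<And>x y z. x \<in> mu_carrier n \<Longrightarrow> y \<in> mu_carrier n \<Longrightarrow> z \<in> mu_carrier n \<Longrightarrow>
      br x (mu_mult n y z) = (\<lambda>k. mu_mult n (br x y) z k + mu_mult n y (br x z) k)"
    using assms(2) by (simp add: poisson_bracket_mu_def)
  have "br (mu_e 1) (mu_e 1) = (\<lambda>k. 0)"
    using assms(2) e1 by (simp add: poisson_bracket_mu_def)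
  then have "br (mu_e 1) (mu_e i) = (\<lambda>k. 0)"
    using mu_derivation_vanishes_on_mu_e[OF leibniz[OF e1]] i by blast
  then have "br (mu_e i) (mu_e 1) = (\<lambda>k. 0)"
    using poisson_bracket_mu_anticomm[OF assms(2) e1 ei] by simp
  then show "br (mu_e i) (mu_e j) = (\<lambda>k. 0)"
    using mu_derivation_vanishes_on_mu_e[OF leibniz[OF ei]] j by blast
qed

end
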